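(* Let $X$ be a finite rack. Then every irreducible strong representation of $X$ is either trivial (the zero representation) or finite-dimensional.
   Context: A rack is a set $X$ with a binary operation $\rhd$ such that each map $x\mapsto x\rhd y$ is bijective and $(x\rhd y)\rhd z=(x\rhd z)\rhd(y\rhd z)$. A stabilizing family of $X$ is a finite family $(u_1,\ldots,u_n)$ in $X$ with $(\cdots(x\rhd u_1)\cdots)\rhd u_n=x$ for all $x\in X$. A representation of $X$ is a complex vector space $V$ with a map $\pi:X\to GL(V)$ such that $\pi_{x\rhd y}=\pi_y\pi_x\pi_y^{-1}$ for all $x,y$. It is strong if for every stabilizing family $(u_1,\ldots,u_n)$ one has $\pi_{u_n}\cdots\pi_{u_1}=\mathrm{id}_V$. A subrepresentation is a subspace invariant under all $\pi_x$; the representation is irreducible if its only subrepresentations are $\{0\}$ and $V$. *)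

theory Defs
  imports Complex_Main
begin

definition rack :: "'x set \<Rightarrow> ('x \<Rightarrow> 'x \<Rightarrow> 'x) \<Rightarrow> bool" where
  "rack X op \<longleftrightarrow>
     (\<forall>x\<in>X. \<forall>y\<in>X. op x y \<in> X) \<and>
     (\<forall>y\<in>X. bij_betw (\<lambda>x. op x y) X X) \<and>
     (\<forall>x\<in>X. \<forall>y\<in>X. \<forall>z\<in>X. op (op x y) z = op (op x z) (op y z))"

definition stabilizing_family :: "'x set \<Rightarrow> ('x \<Rightarrow> 'x \<Rightarrow> 'x) \<Rightarrow> 'x list \<Rightarrow> bool" where
  "stabilizing_family X op us \<longleftrightarrow> set us \<subseteq> X \<and> (\<forall>x\<in>X. foldl op x us = x)"

definition rack_representation ::
  "'x set \<Rightarrow> ('x \<Rightarrow> 'x \<Rightarrow> 'x) \<Rightarrow> (complex \<Rightarrow> 'v::ab_group_add \<Rightarrow> 'v) \<Rightarrow> ('x \<Rightarrow> 'v \<Rightarrow> 'v) \<Rightarrow> bool" where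
  "rack_representation X op scale \<pi> \<longleftrightarrow>
     vector_space scale \<and>
     (\<forall>x\<in>X. Vector_Spaces.linear scale scale (\<pi> x) \<and> bij (\<pi> x)) \<and>
     (\<forall>x\<in>X. \<forall>y\<in>X. \<pi> (op x y) = \<pi> y \<circ> \<pi> x \<circ> inv (\<pi> y))"

definition strong_representation ::
  "'x set \<Rightarrow> ('x \<Rightarrow> 'x \<Rightarrow> 'x) \<Rightarrow> (complex \<Rightarrow> 'v::ab_group_add \<Rightarrow> 'v) \<Rightarrow> ('x \<Rightarrow> 'v \<Rightarrow> 'v) \<Rightarrow> bool" where
  "strong_representation X op scale \<pi> \<longleftrightarrow>
     rack_representation X op scale \<pi> \<and>
     (\<forall>us. stabilizing_family X op us \<longrightarrow> foldl (\<lambda>f u. \<pi> u \<circ> f) id us = id)"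

definition irreducible_representation ::
  "'x set \<Rightarrow> (complex \<Rightarrow> 'v::ab_group_add \<Rightarrow> 'v) \<Rightarrow> ('x \<Rightarrow> 'v \<Rightarrow> 'v) \<Rightarrow> bool" where
  "irreducible_representation X scale \<pi> \<longleftrightarrow>
     (\<forall>W. module.subspace scale W \<and> (\<forall>x\<in>X. \<pi> x ` W \<subseteq> W) \<longrightarrow> W = {0} \<or> W = UNIV)"

end

theory Submission
  imports Defs "HOL-Combinatorics.Cycles"
begin

text \<open>The action of a word \<open>w\<close> of rack elements, \<open>x \<mapsto> (\<dots>(x \<rhd> u\<^sub>1)\<dots>) \<rhd> u\<^sub>n\<close>, is a
  permutation of the finite rack \<open>X\<close>, so it has finite order and the word obtained by repeating
  \<open>w\<close> one time less than that order is a stabilizing family inverting it. For a strong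
  representation this forces the operator \<open>\<pi>\<^sub>w = \<pi>\<^sub>u\<^sub>n \<circ> \<dots> \<circ> \<pi>\<^sub>u\<^sub>1\<close> to depend only on the
  permutation of \<open>X\<close> induced by \<open>w\<close>, so there are only finitely many such operators. Hence the
  orbit of any vector \<open>v \<noteq> 0\<close> under them is finite, and its span is a nonzero subrepresentation,
  which by irreducibility is the whole space.\<close>

text \<open>Extended by the identity outside \<open>X\<close>, so that it \<open>permutes X\<close> in the library's sense.\<close>
definition word_perm :: "'x set \<Rightarrow> ('x \<Rightarrow> 'x \<Rightarrow> 'x) \<Rightarrow> 'x list \<Rightarrow> 'x \<Rightarrow> 'x" where
  "word_perm X op w = (\<lambda>x. if x \<in> X then foldl op x w else x)"

definition word_rep :: "('x \<Rightarrow> 'v \<Rightarrow> 'v) \<Rightarrow> 'x list \<Rightarrow> 'v \<Rightarrow> 'v" where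
  "word_rep \<pi> w = foldl (\<lambda>f u. \<pi> u \<circ> f) id w"

lemma word_rep_Nil: "word_rep \<pi> [] = id"
  by (simp only: word_rep_def foldl_Nil)

lemma foldl_comp_eq_word_rep:
  fixes \<pi> :: "'x \<Rightarrow> 'v \<Rightarrow> 'v" and g :: "'v \<Rightarrow> 'v"
  shows "foldl (\<lambda>f u. \<pi> u \<circ> f) g w = word_rep \<pi> w \<circ> g"
proof (induction w arbitrary: g)
  case Nil
  show ?case by (simp add: word_rep_Nil)
next
  case (Cons u w)
  have "word_rep \<pi> w \<circ> \<pi> u = word_rep \<pi> (u # w)"
    unfolding word_rep_def[of \<pi> "u # w"] foldl_Cons comp_id by (rule Cons.IH[symmetric])
  have "foldl (\<lambda>f u. \<pi> u \<circ> f) g (u # w) = word_rep \<pi> w \<circ> (\<pi> u \<circ> g)"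
    unfolding foldl_Cons by (rule Cons.IH)
  also have "\<dots> = word_rep \<pi> (u # w) \<circ> g"
    by (simp only: comp_assoc[symmetric] \<open>word_rep \<pi> w \<circ> \<pi> u = word_rep \<pi> (u # w)\<close>)
  finally show ?case .
qed

lemma word_rep_append: "word_rep \<pi> (w @ w') = word_rep \<pi> w' \<circ> word_rep \<pi> w"
proof -
  have "word_rep \<pi> (w @ w') = foldl (\<lambda>f u. \<pi> u \<circ> f) (word_rep \<pi> w) w'"
    by (simp only: word_rep_def foldl_append)
  then show ?thesis by (simp only: foldl_comp_eq_word_rep)
qed

lemma word_rep_snoc: "word_rep \<pi> (w @ [x]) = \<pi> x \<circ> word_rep \<pi> w"
proof -
  have "word_rep \<pi> [x] = \<pi> x" by (simp only: word_rep_def foldl_Cons foldl_Nil comp_id)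
  then show ?thesis by (simp only: word_rep_append)
qed

lemma rack_closed: "rack X op \<Longrightarrow> x \<in> X \<Longrightarrow> y \<in> X \<Longrightarrow> op x y \<in> X"
  by (simp add: rack_def)

lemma rack_foldl_in:
  assumes "rack X op" "set w \<subseteq> X" "x \<in> X"
  shows "foldl op x w \<in> X"
  using assms(2,3) by (induction w arbitrary: x) (simp_all add: rack_closed[OF assms(1)])

lemma word_perm_append:
  assumes "rack X op" "set w \<subseteq> X"
  shows "word_perm X op (w @ w') = word_perm X op w' \<circ> word_perm X op w"
  using rack_foldl_in[OF assms] by (auto simp: word_perm_def)

lemma word_perm_concat_replicate:
  assumes "rack X op" "set w \<subseteq> X"
  shows "word_perm X op (concat (replicate k w)) = word_perm X op w ^^ k"
proof (induction k)
  case 0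
  show ?case by (auto simp: word_perm_def)
next
  case (Suc k)
  have "word_perm X op (concat (replicate (Suc k) w)) = word_perm X op w ^^ k \<circ> word_perm X op w"
    using word_perm_append[OF assms] Suc by simp
  also have "\<dots> = word_perm X op w ^^ Suc k" by (rule funpow_Suc_right[symmetric])
  finally show ?case .
qed

lemma word_perm_permutes:
  assumes "rack X op" "set w \<subseteq> X"
  shows "word_perm X op w permutes X"
  using assms(2)
proof (induction w rule: rev_induct)
  case Nil
  have "word_perm X op [] = id" by (simp add: word_perm_def fun_eq_iff)
  then show ?case by (simp only: permutes_id)
next
  case (snoc u w)
  have "bij_betw (\<lambda>x. op x u) X X" using assms(1) snoc.prems by (simp add: rack_def)
  then have "bij_betw (word_perm X op [u]) X X"
    by (rule bij_betw_cong[THEN iffD1, rotated]) (simp add: word_perm_def)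
  then have "word_perm X op [u] permutes X"
    by (rule bij_imp_permutes) (simp add: word_perm_def)
  moreover have "word_perm X op w permutes X" using snoc by simp
  moreover have "word_perm X op (w @ [u]) = word_perm X op [u] \<circ> word_perm X op w"
    using snoc.prems by (simp add: word_perm_append[OF assms(1)])
  ultimately show ?case by (simp only: permutes_compose)
qed

lemma stabilizing_family_iff_word_perm_id:
  "set us \<subseteq> X \<Longrightarrow> stabilizing_family X op us \<longleftrightarrow> word_perm X op us = id"
  by (auto simp: stabilizing_family_def word_perm_def fun_eq_iff)

lemma word_rep_eq_if_word_perm_eq:
  assumes rack: "rack X op" and fin: "finite X"
    and strong: "\<And>us. stabilizing_family X op us \<Longrightarrow> word_rep \<pi> us = id"
    and w: "set w \<subseteq> X" and w': "set w' \<subseteq> X"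
    and eq: "word_perm X op w = word_perm X op w'"
  shows "word_rep \<pi> w = word_rep \<pi> w'"
proof -
  let ?p = "word_perm X op w'"
  have "permutation ?p"
    using fin word_perm_permutes[OF rack w'] by (auto simp: permutation_permutes)
  then obtain n where "?p ^^ n = id" "n > 0" by (rule permutation_is_nilpotent)
  then obtain m where m: "?p ^^ Suc m = id" by (metis Suc_pred)
  define w'' where "w'' = concat (replicate m w')"
  have w'': "set w'' \<subseteq> X" using w' by (auto simp: w''_def)
  have p_n: "?p ^^ m \<circ> ?p = id" "?p \<circ> ?p ^^ m = id"
    using m by (simp only: funpow_Suc_right, simp only: funpow.simps(2))
  have perm_w'': "word_perm X op w'' = ?p ^^ m"
    unfolding w''_def by (rule word_perm_concat_replicate[OF rack w'])
  have "stabilizing_family X op (w @ w'')" "stabilizing_family X op (w'' @ w')"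
    using p_n w w' w'' by (simp_all add: stabilizing_family_iff_word_perm_id
        word_perm_append[OF rack] perm_w'' eq)
  then have inv_left: "word_rep \<pi> w'' \<circ> word_rep \<pi> w = id"
    and inv_right: "word_rep \<pi> w' \<circ> word_rep \<pi> w'' = id"
    by (simp_all add: strong flip: word_rep_append)
  have "word_rep \<pi> w = (word_rep \<pi> w' \<circ> word_rep \<pi> w'') \<circ> word_rep \<pi> w"
    by (simp add: inv_right)
  also have "\<dots> = word_rep \<pi> w'" by (simp add: comp_assoc inv_left)
  finally show ?thesis .
qed

lemma finite_image_if_factors:
  assumes "finite (g ` A)" and "\<And>a b. a \<in> A \<Longrightarrow> b \<in> A \<Longrightarrow> g a = g b \<Longrightarrow> f a = f b"
  shows "finite (f ` A)"
proof -
  define h where "h c = f (SOME a. a \<in> A \<and> g a = c)" for c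
  have "f a = h (g a)" if "a \<in> A" for a
  proof -
    have "(SOME b. b \<in> A \<and> g b = g a) \<in> A \<and> g (SOME b. b \<in> A \<and> g b = g a) = g a"
      using someI[of "\<lambda>b. b \<in> A \<and> g b = g a" a] that by blast
    then show ?thesis unfolding h_def using assms(2) that by metis
  qed
  then have "f ` A \<subseteq> h ` g ` A" by (auto simp: image_image)
  then show ?thesis by (rule finite_surj[OF assms(1)])
qed

lemma finite_word_rep_image:
  assumes "rack X op" "finite X"
    and "\<And>us. stabilizing_family X op us \<Longrightarrow> word_rep \<pi> us = id"
  shows "finite (word_rep \<pi> ` lists X)"
proof (rule finite_image_if_factors)
  show "finite (word_perm X op ` lists X)"
  proof (rule finite_subset[OF _ finite_permutations[OF assms(2)]])
    show "word_perm X op ` lists X \<subseteq> {p. p permutes X}"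
      using word_perm_permutes[OF assms(1)] by auto
  qed
  show "\<And>w w'. w \<in> lists X \<Longrightarrow> w' \<in> lists X \<Longrightarrow> word_perm X op w = word_perm X op w'
    \<Longrightarrow> word_rep \<pi> w = word_rep \<pi> w'"
    using word_rep_eq_if_word_perm_eq[OF assms] by auto
qed

lemma (in vector_space) span_orbit_invariant:
  assumes "\<And>x. x \<in> X \<Longrightarrow> Vector_Spaces.linear scale scale (\<pi> x)" "x \<in> X"
  shows "\<pi> x ` span ((\<lambda>w. word_rep \<pi> w v) ` lists X) \<subseteq> span ((\<lambda>w. word_rep \<pi> w v) ` lists X)"
proof -
  let ?B = "(\<lambda>w. word_rep \<pi> w v) ` lists X"
  have "\<pi> x ` ?B = (\<lambda>w. word_rep \<pi> (w @ [x]) v) ` lists X"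
    by (simp add: image_image word_rep_snoc)
  also have "\<dots> \<subseteq> ?B"
    using assms(2) by (auto intro!: image_eqI[of _ _ "_ @ [x]"])
  finally have "\<pi> x ` ?B \<subseteq> ?B" .
  moreover have "module_hom scale scale (\<pi> x)"
    using assms linear_iff_module_hom by blast
  ultimately show ?thesis
    by (metis module_hom.span_image span_mono)
qed

theorem mainTheorem4:
  fixes X :: "'x set" and op :: "'x \<Rightarrow> 'x \<Rightarrow> 'x"
    and scale :: "complex \<Rightarrow> 'v::ab_group_add \<Rightarrow> 'v" and \<pi> :: "'x \<Rightarrow> 'v \<Rightarrow> 'v"
  assumes "rack X op" and "finite X"
    and "strong_representation X op scale \<pi>"
    and "irreducible_representation X scale \<pi>"
  shows "(UNIV :: 'v set) = {0} \<or> (\<exists>B. finite B \<and> module.span scale B = UNIV)"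
proof (cases "(UNIV :: 'v set) = {0}")
  case False
  then obtain v :: 'v where "v \<noteq> 0" by blast
  interpret vector_space scale
    using assms(3) by (simp add: strong_representation_def rack_representation_def)
  define B where "B = (\<lambda>w. word_rep \<pi> w v) ` lists X"
  have strong: "\<And>us. stabilizing_family X op us \<Longrightarrow> word_rep \<pi> us = id"
    using assms(3) unfolding strong_representation_def word_rep_def by blast
  have "B = (\<lambda>f. f v) ` word_rep \<pi> ` lists X" by (simp add: B_def image_image)
  then have "finite B" using finite_word_rep_image[OF assms(1,2) strong] by simp
  moreover have "span B = UNIV"
  proof -
    have "v \<in> span B"
      using word_rep_Nil[of \<pi>] unfolding B_def by (auto intro!: span_base image_eqI[of _ _ "[]"])
    moreover have "\<pi> x ` span B \<subseteq> span B" if "x \<in> X" for x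
      using assms(3) that unfolding B_def
      by (intro span_orbit_invariant) (auto simp: strong_representation_def rack_representation_def)
    ultimately show ?thesis
      using assms(4) \<open>v \<noteq> 0\<close> subspace_span
      unfolding irreducible_representation_def by blast
  qed
  ultimately show ?thesis by blast
qed simp

end
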